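(* Let $n\ge 2$. For every $(f,\nu)\in\mathrm{Imm}_1(S^{n-1},\mathbb{R}^{2n-1})$ there exists $(h,\mu)\in\mathrm{Emb}_1(S^{n-1},\mathbb{R}^{2n-1})$ that lies in the same path-component of $\mathrm{Imm}_1(S^{n-1},\mathbb{R}^{2n-1})$ as $(f,\nu)$.
   Context: $\mathrm{Imm}_1(S^{n-1},\mathbb{R}^{2n-1})$ is the space of pairs $(l,\nu)$ where $l\colon S^{n-1}\to\mathbb{R}^{2n-1}$ is a $C^\infty$ immersion and $\nu$ is a vector field along $l$ transversal to $l$ (i.e. $\nu(x)\notin dl(T_xS^{n-1})$), topologized with the $C^1$ topology on immersions and the compact-open topology on fields. $\mathrm{Emb}_1(S^{n-1},\mathbb{R}^{2n-1})$ is the subspace of pairs with $l$ an embedding. *)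

theory Defs
  imports "HOL-Analysis.Analysis"
begin

fun dd :: "('a::real_normed_vector \<Rightarrow> 'b::real_normed_vector) \<Rightarrow> 'a list \<Rightarrow> 'a \<Rightarrow> 'b" where
  "dd f [] = f"
| "dd f (v # vs) = (\<lambda>x. frechet_derivative (dd f vs) (at x) v)"

text \<open>C-infinity on an open set: all iterated derivatives exist (and hence are continuous).\<close>
definition smooth_on :: "'a::real_normed_vector set \<Rightarrow> ('a \<Rightarrow> 'b::real_normed_vector) \<Rightarrow> bool" where
  "smooth_on U f \<longleftrightarrow> (\<forall>vs. \<forall>x\<in>U. dd f vs differentiable (at x))"

abbreviation Sph :: "(real^'n) set" where
  "Sph \<equiv> sphere 0 1"

definition radext :: "(real^'n \<Rightarrow> 'b) \<Rightarrow> real^'n \<Rightarrow> 'b" where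
  "radext l = (\<lambda>y. l (scaleR (1 / norm y) y))"

text \<open>Differential of l at x in S (applied to a tangent vector v, i.e. v \<bullet> x = 0).\<close>
definition dmap :: "(real^'n \<Rightarrow> real^'m) \<Rightarrow> real^'n \<Rightarrow> real^'n \<Rightarrow> real^'m" where
  "dmap l x v = frechet_derivative (radext l) (at x) v"

definition tangent :: "real^'n \<Rightarrow> (real^'n) set" where
  "tangent x = {v. v \<bullet> x = 0}"

text \<open>Maps are normalised to be 0 off
  the sphere, so that a pair is determined by its restriction to the sphere.\<close>
definition Imm1 :: "((real^'n \<Rightarrow> real^'m) \<times> (real^'n \<Rightarrow> real^'m)) set" where
  "Imm1 = {(l, \<nu>).
      (\<forall>x. x \<notin> Sph \<longrightarrow> l x = 0 \<and> \<nu> x = 0)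
    \<and> smooth_on (- {0}) (radext l)
    \<and> (\<forall>x\<in>Sph. \<forall>v\<in>tangent x. v \<noteq> 0 \<longrightarrow> dmap l x v \<noteq> 0)
    \<and> continuous_on Sph \<nu>
    \<and> (\<forall>x\<in>Sph. \<nu> x \<notin> dmap l x ` tangent x)}"

definition Emb1 :: "((real^'n \<Rightarrow> real^'m) \<times> (real^'n \<Rightarrow> real^'m)) set" where
  "Emb1 = {(l, \<nu>) \<in> Imm1. inj_on l Sph}"

text \<open>C^1 distance on immersions plus uniform (= compact-open, the sphere being compact)
  distance on fields.\<close>
definition imm_dist ::
  "((real^'n \<Rightarrow> real^'m) \<times> (real^'n \<Rightarrow> real^'m)) \<Rightarrow>
   ((real^'n \<Rightarrow> real^'m) \<times> (real^'n \<Rightarrow> real^'m)) \<Rightarrow> real" where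
  "imm_dist p q =
     (SUP x\<in>Sph. norm (fst p x - fst q x))
   + (SUP xv\<in>{(x, v). x \<in> Sph \<and> v \<in> tangent x \<and> norm v \<le> 1}.
        norm (dmap (fst p) (fst xv) (snd xv) - dmap (fst q) (fst xv) (snd xv)))
   + (SUP x\<in>Sph. norm (snd p x - snd q x))"

definition imm_open :: "((real^'n \<Rightarrow> real^'m) \<times> (real^'n \<Rightarrow> real^'m)) set \<Rightarrow> bool" where
  "imm_open U \<longleftrightarrow> U \<subseteq> Imm1 \<and>
     (\<forall>p\<in>U. \<exists>e>0. \<forall>q\<in>Imm1. imm_dist q p < e \<longrightarrow> q \<in> U)"

lemma istopology_imm_open:
  "istopology (imm_open :: ((real^'n \<Rightarrow> real^'m) \<times> (real^'n \<Rightarrow> real^'m)) set \<Rightarrow> bool)"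
proof -
  have 1: "imm_open (S \<inter> T)" if a: "imm_open S" "imm_open T"
    for S T :: "((real^'n \<Rightarrow> real^'m) \<times> (real^'n \<Rightarrow> real^'m)) set"
    unfolding imm_open_def
  proof (intro conjI ballI)
    show "S \<inter> T \<subseteq> Imm1" using a unfolding imm_open_def by blast
    fix p assume p: "p \<in> S \<inter> T"
    then obtain e1 e2 where e: "e1 > 0" "\<forall>q\<in>Imm1. imm_dist q p < e1 \<longrightarrow> q \<in> S"
      "e2 > 0" "\<forall>q\<in>Imm1. imm_dist q p < e2 \<longrightarrow> q \<in> T"
      using a unfolding imm_open_def by blast
    show "\<exists>e>0. \<forall>q\<in>Imm1. imm_dist q p < e \<longrightarrow> q \<in> S \<inter> T"
    proof (rule exI[of _ "min e1 e2"], rule conjI)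
      show "0 < min e1 e2" using e(1,3) by simp
      show "\<forall>q\<in>Imm1. imm_dist q p < min e1 e2 \<longrightarrow> q \<in> S \<inter> T"
      proof (intro ballI impI)
        fix q assume q: "q \<in> Imm1" "imm_dist q p < min e1 e2"
        have "q \<in> S" using e(2) q by simp
        moreover have "q \<in> T" using e(4) q by simp
        ultimately show "q \<in> S \<inter> T" by blast
      qed
    qed
  qed
  have 2: "imm_open (\<Union>K)" if K: "\<forall>S\<in>K. imm_open S"
    for K :: "((real^'n \<Rightarrow> real^'m) \<times> (real^'n \<Rightarrow> real^'m)) set set"
    unfolding imm_open_def
  proof (intro conjI ballI)
    show "\<Union>K \<subseteq> Imm1" using K unfolding imm_open_def by auto
    fix p assume "p \<in> \<Union>K"
    then obtain S where S: "S \<in> K" "p \<in> S" by blast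
    then obtain e where e: "e > 0" "\<forall>q\<in>Imm1. imm_dist q p < e \<longrightarrow> q \<in> S"
      using K unfolding imm_open_def by blast
    show "\<exists>e>0. \<forall>q\<in>Imm1. imm_dist q p < e \<longrightarrow> q \<in> \<Union>K"
      using e S(1) by blast
  qed
  show ?thesis unfolding istopology_def using 1 2 by blast
qed

definition Imm1_top :: "((real^'n \<Rightarrow> real^'m) \<times> (real^'n \<Rightarrow> real^'m)) topology" where
  "Imm1_top = topology imm_open"

end

theory Submission
  imports Defs
begin

text \<open>Perturb the immersion by a linear map, \<open>f + L\<close> on the sphere. Being an immersion with a
  transversal field is an open condition in the \<open>C\<^sup>1\<close> topology, so for all small \<open>L\<close> the
  segment \<open>t \<mapsto> (f + t L, \<nu>)\<close>, \<open>0 \<le> t \<le> 1\<close>, is a path in \<open>Imm\<^sub>1\<close>. The matrices \<open>L\<close> for which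
  \<open>f + L\<close> identifies two points \<open>x \<noteq> y\<close> of the sphere form a null set when \<open>m \<ge> 2n - 1\<close>: such
  an \<open>L\<close> is determined by \<open>x\<close>, \<open>y\<close> and all columns of \<open>L\<close> but one, and the \<open>2(n - 1)\<close>
  chart coordinates of \<open>x\<close> and \<open>y\<close> fit into \<open>m - 1\<close> entries of the remaining column. So these
  \<open>L\<close> lie in finitely many differentiable images of hyperplanes of matrices, and some small
  \<open>L\<close> makes \<open>f + L\<close> injective.\<close>

section \<open>Smooth maps off the origin\<close>

lemma dd_append: "dd g (vs @ [v]) = dd (dd g [v]) vs"
  by (induction vs) auto

lemma smooth_on_dd:
  assumes "smooth_on U g" shows "smooth_on U (dd g [v])"
  using assms unfolding smooth_on_def by (metis dd_append)

lemma smooth_on_imp_differentiable: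
  assumes "smooth_on U g" "x \<in> U" shows "g differentiable (at x)"
  using assms unfolding smooth_on_def by (metis dd.simps(1))

lemma has_frechet_derivative_transform_open:
  assumes "open U" "x \<in> U" "\<forall>y\<in>U. g y = h y" "h differentiable (at x)"
  shows "(g has_derivative frechet_derivative h (at x)) (at x)"
  using has_derivative_transform_within_open[of h] assms frechet_derivative_works by metis

lemma smooth_on_if_derivative_closed:
  assumes U: "open U" and g: "g \<in> C"
    and diff: "\<And>h x. h \<in> C \<Longrightarrow> x \<in> U \<Longrightarrow> h differentiable (at x)"
    and deriv: "\<And>h v. h \<in> C \<Longrightarrow> \<exists>h'\<in>C. \<forall>x\<in>U. frechet_derivative h (at x) v = h' x"
  shows "smooth_on U g"
proof -
  have agree: "\<exists>h'\<in>C. \<forall>x\<in>U. dd h vs x = h' x" if "h \<in> C" for h vs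
    using that
  proof (induction vs arbitrary: h)
    case Nil
    then show ?case by auto
  next
    case (Cons v vs)
    then obtain h' where h': "h' \<in> C" "\<forall>x\<in>U. dd h vs x = h' x" by blast
    obtain h'' where h'': "h'' \<in> C" "\<forall>x\<in>U. frechet_derivative h' (at x) v = h'' x"
      using deriv[OF h'(1)] by blast
    have "dd h (v # vs) x = h'' x" if "x \<in> U" for x
      using has_frechet_derivative_transform_open[OF U that h'(2) diff[OF h'(1) that]] h''(2) that
      by (simp add: frechet_derivative_at[symmetric])
    then show ?case using h''(1) by blast
  qed
  show ?thesis
    unfolding smooth_on_def
  proof (intro allI ballI)
    fix vs x assume "x \<in> U"
    obtain h' where h': "h' \<in> C" "\<forall>x\<in>U. dd g vs x = h' x" using agree[OF g] by blast
    show "dd g vs differentiable (at x)"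
      using has_frechet_derivative_transform_open[OF U \<open>x \<in> U\<close> h'(2) diff[OF h'(1) \<open>x \<in> U\<close>]]
      by (rule differentiableI)
  qed
qed

lemma frechet_derivative_add:
  assumes "f differentiable (at x)" "g differentiable (at x)"
  shows "frechet_derivative (\<lambda>y. f y + g y) (at x)
    = (\<lambda>v. frechet_derivative f (at x) v + frechet_derivative g (at x) v)"
  using has_derivative_add[OF assms[unfolded frechet_derivative_works]]
  by (rule frechet_derivative_at[symmetric])

lemma smooth_on_add:
  assumes U: "open U" and g: "smooth_on U g" and h: "smooth_on U h"
  shows "smooth_on U (\<lambda>y. g y + h y)"
proof (rule smooth_on_if_derivative_closed[OF U])
  let ?C = "{k. \<exists>g h. smooth_on U g \<and> smooth_on U h \<and> k = (\<lambda>y. g y + h y)}"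
  show "(\<lambda>y. g y + h y) \<in> ?C" using g h by (intro CollectI exI[of _ g] exI[of _ h]) simp
  show "k differentiable (at x)" if "k \<in> ?C" "x \<in> U" for k x
  proof -
    obtain g h where gh: "smooth_on U g" "smooth_on U h" "k = (\<lambda>y. g y + h y)"
      using \<open>k \<in> ?C\<close> by blast
    show ?thesis
      unfolding gh(3) using gh(1,2)[THEN smooth_on_imp_differentiable, OF \<open>x \<in> U\<close>]
      by (rule differentiable_add)
  qed
  show "\<exists>k'\<in>?C. \<forall>x\<in>U. frechet_derivative k (at x) v = k' x" if "k \<in> ?C" for k v
  proof -
    obtain g h where gh: "smooth_on U g" "smooth_on U h" "k = (\<lambda>y. g y + h y)"
      using \<open>k \<in> ?C\<close> by blast
    have "frechet_derivative k (at x) v = dd g [v] x + dd h [v] x" if "x \<in> U" for x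
      unfolding gh(3)
      using gh(1,2)[THEN smooth_on_imp_differentiable, OF that]
      by (simp add: frechet_derivative_add)
    moreover have "(\<lambda>y. dd g [v] y + dd h [v] y) \<in> ?C"
      using gh(1,2)[THEN smooth_on_dd] by (intro CollectI exI[of _ "dd g [v]"] exI[of _ "dd h [v]"]) simp
    ultimately show ?thesis by (intro bexI[of _ "\<lambda>y. dd g [v] y + dd h [v] y"]) simp_all
  qed
qed

inductive_set invnorm_poly :: "('a::real_inner \<Rightarrow> real) set" where
  const: "(\<lambda>y. c) \<in> invnorm_poly"
| inner: "(\<lambda>y. y \<bullet> u) \<in> invnorm_poly"
| invnorm: "(\<lambda>y. 1 / norm y) \<in> invnorm_poly"
| add: "a \<in> invnorm_poly \<Longrightarrow> b \<in> invnorm_poly \<Longrightarrow> (\<lambda>y. a y + b y) \<in> invnorm_poly"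
| mult: "a \<in> invnorm_poly \<Longrightarrow> b \<in> invnorm_poly \<Longrightarrow> (\<lambda>y. a y * b y) \<in> invnorm_poly"

lemma frechet_derivative_mult:
  fixes f g :: "'a::real_normed_vector \<Rightarrow> real"
  assumes "f differentiable (at x)" "g differentiable (at x)"
  shows "frechet_derivative (\<lambda>y. f y * g y) (at x)
    = (\<lambda>v. f x * frechet_derivative g (at x) v + frechet_derivative f (at x) v * g x)"
  using has_derivative_mult[OF assms[unfolded frechet_derivative_works]]
  by (rule frechet_derivative_at[symmetric])

lemma invnorm_poly_differentiable:
  assumes "s \<in> invnorm_poly" "x \<noteq> 0"
  shows "s differentiable (at x)"
  using assms(1)
proof induction
  case (inner u)
  show ?case by (rule bounded_linear_imp_differentiable) (rule bounded_linear_inner_left)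
next
  case invnorm
  show ?case
    using assms(2) by (intro differentiable_divide differentiable_const differentiable_norm_at) simp_all
qed (simp_all add: differentiable_add differentiable_mult)

lemma frechet_derivative_inverse_norm:
  fixes x :: "'a::real_inner"
  assumes "x \<noteq> 0"
  shows "frechet_derivative (\<lambda>y. 1 / norm y) (at x) v = - (x \<bullet> v) / norm x ^ 3"
proof -
  have "((\<lambda>y. 1 / norm y) has_derivative
      (\<lambda>h. - 1 * (inverse (norm x) * (h \<bullet> sgn x) * inverse (norm x)) + 0 / norm x)) (at x)"
    using assms by (intro has_derivative_divide has_derivative_const has_derivative_norm) simp_all
  moreover have "- 1 * (inverse (norm x) * (v \<bullet> sgn x) * inverse (norm x)) + 0 / norm x
      = - (x \<bullet> v) / norm x ^ 3"
    by (simp add: sgn_div_norm inner_commute divide_inverse power3_eq_cube)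
  ultimately show ?thesis
    by (simp add: frechet_derivative_at[symmetric])
qed

lemma invnorm_poly_frechet_derivative:
  assumes "s \<in> invnorm_poly"
  shows "\<exists>s'\<in>invnorm_poly. \<forall>x. x \<noteq> 0 \<longrightarrow> frechet_derivative s (at x) v = s' x"
  using assms
proof induction
  case (const c)
  show ?case
    by (rule bexI[of _ "\<lambda>y. 0"]) (simp_all add: frechet_derivative_const invnorm_poly.const)
next
  case (inner u)
  have "frechet_derivative (\<lambda>y. y \<bullet> u) (at x) = (\<lambda>y. y \<bullet> u)" for x :: 'a
    by (intro frechet_derivative_at[symmetric] bounded_linear_imp_has_derivative
        bounded_linear_inner_left)
  then show ?case by (intro bexI[of _ "\<lambda>y. v \<bullet> u"]) (simp_all add: invnorm_poly.const)
next
  case invnorm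
  let ?D = "\<lambda>x. -1 * ((x \<bullet> v) * (1 / norm x * (1 / norm x * (1 / norm x))))"
  have "?D \<in> invnorm_poly"
    by (intro invnorm_poly.intros)
  moreover have "frechet_derivative (\<lambda>y. 1 / norm y) (at x) v = ?D x" if "x \<noteq> 0" for x :: 'a
    using that by (simp add: frechet_derivative_inverse_norm power3_eq_cube)
  ultimately show ?case by (intro bexI[of _ ?D]) simp_all
next
  case (add a b)
  then obtain sa sb where s: "sa \<in> invnorm_poly" "sb \<in> invnorm_poly"
    "\<forall>x. x \<noteq> 0 \<longrightarrow> frechet_derivative a (at x) v = sa x"
    "\<forall>x. x \<noteq> 0 \<longrightarrow> frechet_derivative b (at x) v = sb x" by meson
  have "frechet_derivative (\<lambda>y. a y + b y) (at x) v = sa x + sb x" if "x \<noteq> 0" for x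
    using add.hyps[THEN invnorm_poly_differentiable, OF that] s(3,4) that
    by (simp add: frechet_derivative_add)
  then show ?case
    using invnorm_poly.add[OF s(1,2)] by (intro bexI[of _ "\<lambda>y. sa y + sb y"]) simp_all
next
  case (mult a b)
  then obtain sa sb where s: "sa \<in> invnorm_poly" "sb \<in> invnorm_poly"
    "\<forall>x. x \<noteq> 0 \<longrightarrow> frechet_derivative a (at x) v = sa x"
    "\<forall>x. x \<noteq> 0 \<longrightarrow> frechet_derivative b (at x) v = sb x" by meson
  have "frechet_derivative (\<lambda>y. a y * b y) (at x) v = a x * sb x + sa x * b x" if "x \<noteq> 0" for x
    using mult.hyps[THEN invnorm_poly_differentiable, OF that] s(3,4) that
    by (simp add: frechet_derivative_mult)
  moreover have "(\<lambda>y. a y * sb y + sa y * b y) \<in> invnorm_poly"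
    using mult.hyps s(1,2) by (intro invnorm_poly.add invnorm_poly.mult)
  ultimately show ?case by (intro bexI[of _ "\<lambda>y. a y * sb y + sa y * b y"]) simp_all
qed

lemma frechet_derivative_inner_left:
  assumes "f differentiable (at x)"
  shows "frechet_derivative (\<lambda>y. f y \<bullet> b) (at x) v = frechet_derivative f (at x) v \<bullet> b"
proof -
  have "(\<lambda>w. frechet_derivative f (at x) w \<bullet> b) = frechet_derivative (\<lambda>y. f y \<bullet> b) (at x)"
    using assms unfolding frechet_derivative_works by (intro frechet_derivative_at has_derivative_inner_left)
  from fun_cong[OF this, of v] show ?thesis by simp
qed

lemma smooth_on_if_components_invnorm_poly:
  fixes h :: "'a::real_inner \<Rightarrow> 'b::euclidean_space"
  assumes "\<forall>b\<in>Basis. (\<lambda>y. h y \<bullet> b) \<in> invnorm_poly"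
  shows "smooth_on (- {0}) h"
proof (rule smooth_on_if_derivative_closed[OF open_Compl[OF closed_singleton]])
  let ?C = "{h :: 'a \<Rightarrow> 'b. \<forall>b\<in>Basis. (\<lambda>y. h y \<bullet> b) \<in> invnorm_poly}"
  show "h \<in> ?C" using assms by simp
  have diff: "k differentiable (at x)" if "k \<in> ?C" "x \<noteq> 0" for k x
    using that differentiable_componentwise_within[of k x UNIV]
    by (simp add: invnorm_poly_differentiable)
  then show "k differentiable (at x)" if "k \<in> ?C" "x \<in> - {0}" for k x
    using that by simp
  show "\<exists>k'\<in>?C. \<forall>x\<in>- {0}. frechet_derivative k (at x) v = k' x" if k: "k \<in> ?C" for k v
  proof -
    have "\<exists>s'. s' \<in> invnorm_poly \<and> (\<forall>x. x \<noteq> 0 \<longrightarrow> frechet_derivative k (at x) v \<bullet> b = s' x)"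
      if "b \<in> Basis" for b
    proof -
      have "(\<lambda>y. k y \<bullet> b) \<in> invnorm_poly" using k that by simp
      then obtain s' where s': "s' \<in> invnorm_poly"
        "\<forall>x. x \<noteq> 0 \<longrightarrow> frechet_derivative (\<lambda>y. k y \<bullet> b) (at x) v = s' x"
        using invnorm_poly_frechet_derivative by blast
      then have "\<forall>x. x \<noteq> 0 \<longrightarrow> frechet_derivative k (at x) v \<bullet> b = s' x"
        using frechet_derivative_inner_left[OF diff[OF k]] by simp
      with s'(1) show ?thesis by blast
    qed
    then obtain S where S: "\<And>b. b \<in> Basis \<Longrightarrow> S b \<in> invnorm_poly"
      "\<And>b x. b \<in> Basis \<Longrightarrow> x \<noteq> 0 \<Longrightarrow> frechet_derivative k (at x) v \<bullet> b = S b x"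
      by metis
    have "frechet_derivative k (at x) v = (\<Sum>b\<in>Basis. S b x *\<^sub>R b)" if "x \<noteq> 0" for x
      using S(2)[OF _ that] by (simp add: euclidean_representation_sum')
    then show ?thesis
      using S(1) by (intro bexI[of _ "\<lambda>y. \<Sum>b\<in>Basis. S b y *\<^sub>R b"]) simp_all
  qed
qed

section \<open>Linear perturbations of an immersion\<close>

lemma Imm1_iff:
  "(l, \<nu>) \<in> Imm1 \<longleftrightarrow>
      (\<forall>x. x \<notin> Sph \<longrightarrow> l x = 0 \<and> \<nu> x = 0)
    \<and> smooth_on (- {0}) (radext l)
    \<and> (\<forall>x\<in>Sph. \<forall>v\<in>tangent x. v \<noteq> 0 \<longrightarrow> dmap l x v \<noteq> 0)
    \<and> continuous_on Sph \<nu>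
    \<and> (\<forall>x\<in>Sph. \<nu> x \<notin> dmap l x ` tangent x)"
  unfolding Imm1_def by simp

lemma radext_on_Sph: "x \<in> Sph \<Longrightarrow> radext f x = f x"
  by (simp add: radext_def)

lemma dmap_linear:
  assumes "smooth_on (- {0}) (radext f)" "x \<noteq> 0"
  shows "linear (dmap f x)"
  unfolding dmap_def[abs_def]
  using assms by (simp add: linear_frechet_derivative smooth_on_imp_differentiable)

lemma continuous_on_dmap:
  fixes f :: "real^'n \<Rightarrow> real^'m"
  assumes sm: "smooth_on (- {0}) (radext f)"
  shows "continuous_on ((- {0}) \<times> UNIV) (\<lambda>p. dmap f (fst p) (snd p))"
proof -
  have cont: "continuous_on (- {0}) (\<lambda>x. dmap f x w)" for w
  proof (rule continuous_at_imp_continuous_on, rule ballI)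
    fix x :: "real^'n" assume "x \<in> - {0}"
    then have "dd (radext f) [w] differentiable (at x)"
      using smooth_on_imp_differentiable[OF smooth_on_dd[OF sm]] by blast
    then show "isCont (\<lambda>x. dmap f x w) x"
      by (simp add: dmap_def differentiable_imp_continuous_within)
  qed
  have expand: "dmap f x v = (\<Sum>i\<in>UNIV. v $ i *\<^sub>R dmap f x (axis i 1))"
    if "x \<noteq> 0" for x v
  proof -
    have "v = (\<Sum>i\<in>UNIV. v $ i *\<^sub>R axis i 1)"
      using basis_expansion[of v] by (simp add: scalar_mult_eq_scaleR)
    then have "dmap f x v = dmap f x (\<Sum>i\<in>UNIV. v $ i *\<^sub>R axis i 1)" by simp
    also have "\<dots> = (\<Sum>i\<in>UNIV. v $ i *\<^sub>R dmap f x (axis i 1))"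
      using dmap_linear[OF sm that] by (simp add: linear_sum linear_scale)
    finally show ?thesis .
  qed
  have "continuous_on ((- {0}) \<times> UNIV) (\<lambda>p. \<Sum>i\<in>UNIV. snd p $ i *\<^sub>R dmap f (fst p) (axis i 1))"
  proof (intro continuous_on_sum continuous_on_scaleR)
    show "continuous_on ((- {0}) \<times> UNIV) (\<lambda>p. snd p $ i)" for i :: 'n
      by (intro continuous_intros)
    show "continuous_on ((- {0}) \<times> UNIV) (\<lambda>p. dmap f (fst p) (axis i 1))" for i :: 'n
      by (rule continuous_on_compose2[OF cont continuous_on_fst]) auto
  qed
  then show ?thesis
  proof (rule continuous_on_eq)
    fix p :: "(real^'n) \<times> (real^'n)" assume "p \<in> (- {0}) \<times> UNIV"
    then have "fst p \<noteq> 0" by auto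
    then show "(\<Sum>i\<in>UNIV. snd p $ i *\<^sub>R dmap f (fst p) (axis i 1)) = dmap f (fst p) (snd p)"
      by (rule expand[symmetric])
  qed
qed

definition perturb :: "(real^'n \<Rightarrow> real^'m) \<Rightarrow> real^'n^'m \<Rightarrow> real^'n \<Rightarrow> real^'m" where
  "perturb f L x = (if x \<in> Sph then f x + L *v x else 0)"

lemma perturb_0:
  assumes "\<forall>x. x \<notin> Sph \<longrightarrow> f x = 0"
  shows "perturb f 0 = f"
  using assms by (auto simp: perturb_def)

lemma radext_perturb:
  fixes f :: "real^'n \<Rightarrow> real^'m"
  assumes "\<forall>x. x \<notin> Sph \<longrightarrow> f x = 0"
  shows "radext (perturb f L) = (\<lambda>y. radext f y + (1 / norm y) *\<^sub>R (L *v y))"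
proof
  fix y :: "real^'n"
  show "radext (perturb f L) y = radext f y + (1 / norm y) *\<^sub>R (L *v y)"
    using assms by (cases "y = 0") (simp_all add: radext_def perturb_def matrix_vector_mult_scaleR)
qed

lemma smooth_on_matrix_div_norm:
  fixes L :: "real^'n^'m"
  shows "smooth_on (- {0}) (\<lambda>y. (1 / norm y) *\<^sub>R (L *v y))"
proof (rule smooth_on_if_components_invnorm_poly, rule ballI)
  fix b :: "real^'m" assume "b \<in> Basis"
  then obtain r where "b = axis r 1" by (auto simp: Basis_vec_def)
  then have eq: "(\<lambda>y. (1 / norm y) *\<^sub>R (L *v y) \<bullet> b) = (\<lambda>y. 1 / norm y * (y \<bullet> L $ r))"
    by (simp add: inner_axis' matrix_vector_mul_component inner_commute)
  show "(\<lambda>y. (1 / norm y) *\<^sub>R (L *v y) \<bullet> b) \<in> invnorm_poly"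
    unfolding eq by (rule invnorm_poly.mult[OF invnorm_poly.invnorm invnorm_poly.inner])
qed

lemma smooth_on_perturb:
  assumes "\<forall>x. x \<notin> Sph \<longrightarrow> f x = 0" "smooth_on (- {0}) (radext f)"
  shows "smooth_on (- {0}) (radext (perturb f L))"
  unfolding radext_perturb[OF assms(1)]
  by (rule smooth_on_add[OF open_Compl[OF closed_singleton] assms(2) smooth_on_matrix_div_norm])

text \<open>On the unit sphere the radial factor has zero derivative in tangent directions.\<close>
lemma frechet_derivative_div_norm_tangent:
  fixes T :: "'a::real_inner \<Rightarrow> 'b::real_normed_vector"
  assumes T: "bounded_linear T" and x: "norm x = 1" and v: "x \<bullet> v = 0"
  shows "frechet_derivative (\<lambda>y. (1 / norm y) *\<^sub>R T y) (at x) v = T v"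
proof -
  have "x \<noteq> 0" using x by auto
  have "(\<lambda>y. 1 / norm y) differentiable (at x)"
    using \<open>x \<noteq> 0\<close> by (intro invnorm_poly_differentiable invnorm_poly.invnorm)
  then have "((\<lambda>y. (1 / norm y) *\<^sub>R T y) has_derivative
      (\<lambda>w. (1 / norm x) *\<^sub>R T w + frechet_derivative (\<lambda>y. 1 / norm y) (at x) w *\<^sub>R T x)) (at x)"
    using T by (intro has_derivative_scaleR bounded_linear_imp_has_derivative)
      (simp_all add: frechet_derivative_works)
  then show ?thesis
    using x v \<open>x \<noteq> 0\<close> by (simp add: frechet_derivative_at[symmetric] frechet_derivative_inverse_norm)
qed

lemma dmap_perturb:
  assumes "\<forall>x. x \<notin> Sph \<longrightarrow> f x = 0" "smooth_on (- {0}) (radext f)"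
    and x: "x \<in> Sph" and v: "v \<in> tangent x"
  shows "dmap (perturb f L) x v = dmap f x v + L *v v"
proof -
  have "x \<noteq> 0" using x by auto
  have "(\<lambda>y. (1 / norm y) *\<^sub>R (L *v y)) differentiable (at x)"
    using smooth_on_imp_differentiable[OF smooth_on_matrix_div_norm] \<open>x \<noteq> 0\<close> by simp
  moreover have "frechet_derivative (\<lambda>y. (1 / norm y) *\<^sub>R (L *v y)) (at x) v = L *v v"
    using x v by (intro frechet_derivative_div_norm_tangent matrix_vector_mul_bounded_linear)
      (simp_all add: tangent_def inner_commute)
  ultimately show ?thesis
    unfolding dmap_def radext_perturb[OF assms(1)]
    using smooth_on_imp_differentiable[OF assms(2)] \<open>x \<noteq> 0\<close> by (simp add: frechet_derivative_add)
qed

section \<open>Openness of \<open>Imm\<^sub>1\<close> in the \<open>C\<^sup>1\<close> topology\<close>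

lemma compact_pos_lower_bound:
  fixes g :: "'a::topological_space \<Rightarrow> real"
  assumes "compact K" "continuous_on K g" "\<And>p. p \<in> K \<Longrightarrow> 0 < g p"
  obtains c where "c > 0" "\<And>p. p \<in> K \<Longrightarrow> c \<le> g p"
proof (cases "K = {}")
  case True
  then show ?thesis using that[of 1] by simp
next
  case False
  obtain p0 where "p0 \<in> K" "\<forall>p\<in>K. g p0 \<le> g p"
    using continuous_attains_inf[OF assms(1) False assms(2)] by blast
  then show ?thesis using that[of "g p0"] assms(3) by blast
qed

lemma compact_tangent_pairs:
  assumes "compact A" "compact B"
  shows "compact ((A \<times> B) \<inter> {p :: (real^'n) \<times> (real^'n). snd p \<bullet> fst p = 0})"
  by (intro compact_Int_closed compact_Times closed_Collect_eq assms continuous_intros)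

lemma Imm1_immersion_bound:
  fixes f \<nu> :: "real^'n \<Rightarrow> real^'m"
  assumes "(f, \<nu>) \<in> Imm1"
  obtains c where "c > 0" "\<And>x v. x \<in> Sph \<Longrightarrow> v \<in> tangent x \<Longrightarrow> c * norm v \<le> norm (dmap f x v)"
proof -
  have sm: "smooth_on (- {0}) (radext f)"
    and imm: "\<forall>x\<in>Sph. \<forall>v\<in>tangent x. v \<noteq> 0 \<longrightarrow> dmap f x v \<noteq> 0"
    using assms unfolding Imm1_iff by auto
  define K where "K = (Sph \<times> Sph) \<inter> {p :: (real^'n) \<times> (real^'n). snd p \<bullet> fst p = 0}"
  have cK: "compact K"
    unfolding K_def by (intro compact_tangent_pairs compact_sphere)
  have cont: "continuous_on K (\<lambda>p. norm (dmap f (fst p) (snd p)))"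
    by (intro continuous_on_norm continuous_on_subset[OF continuous_on_dmap[OF sm]])
      (auto simp: K_def)
  have pos: "0 < norm (dmap f (fst p) (snd p))" if "p \<in> K" for p
  proof -
    have "fst p \<in> Sph" "snd p \<in> tangent (fst p)" "snd p \<noteq> 0"
      using that by (auto simp: K_def tangent_def)
    then show ?thesis using imm by simp
  qed
  obtain c where c: "c > 0" "\<And>p. p \<in> K \<Longrightarrow> c \<le> norm (dmap f (fst p) (snd p))"
    using compact_pos_lower_bound[OF cK cont pos] by blast
  have "c * norm v \<le> norm (dmap f x v)" if x: "x \<in> Sph" and v: "v \<in> tangent x" for x v
  proof (cases "v = 0")
    case True
    then show ?thesis by simp
  next
    case False
    have "(x, (1 / norm v) *\<^sub>R v) \<in> K" using x v False by (auto simp: K_def tangent_def)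
    then have "c \<le> norm (dmap f x ((1 / norm v) *\<^sub>R v))" using c(2) by fastforce
    also have "dmap f x ((1 / norm v) *\<^sub>R v) = (1 / norm v) *\<^sub>R dmap f x v"
      using x by (intro linear_scale dmap_linear[OF sm]) auto
    finally show ?thesis using False by (simp add: field_simps)
  qed
  with c(1) show ?thesis by (rule that)
qed

lemma Imm1_transversality_bound:
  fixes f \<nu> :: "real^'n \<Rightarrow> real^'m"
  assumes "(f, \<nu>) \<in> Imm1"
  obtains c where "c > 0"
    "\<And>x v. x \<in> Sph \<Longrightarrow> v \<in> tangent x \<Longrightarrow> norm v \<le> R \<Longrightarrow> c \<le> norm (\<nu> x - dmap f x v)"
proof -
  have sm: "smooth_on (- {0}) (radext f)" and cnu: "continuous_on Sph \<nu>"
    and tr: "\<forall>x\<in>Sph. \<nu> x \<notin> dmap f x ` tangent x"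
    using assms unfolding Imm1_iff by auto
  define K where "K = (Sph \<times> cball 0 R) \<inter> {p :: (real^'n) \<times> (real^'n). snd p \<bullet> fst p = 0}"
  have cK: "compact K"
    unfolding K_def by (intro compact_tangent_pairs compact_sphere compact_cball)
  have cont: "continuous_on K (\<lambda>p. norm (\<nu> (fst p) - dmap f (fst p) (snd p)))"
  proof (intro continuous_on_norm continuous_on_diff)
    show "continuous_on K (\<lambda>p. \<nu> (fst p))"
      by (rule continuous_on_compose2[OF cnu continuous_on_fst]) (auto simp: K_def)
    show "continuous_on K (\<lambda>p. dmap f (fst p) (snd p))"
      by (rule continuous_on_subset[OF continuous_on_dmap[OF sm]]) (auto simp: K_def)
  qed
  have pos: "0 < norm (\<nu> (fst p) - dmap f (fst p) (snd p))" if "p \<in> K" for p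
  proof -
    have "fst p \<in> Sph" "snd p \<in> tangent (fst p)"
      using that by (auto simp: K_def tangent_def)
    then show ?thesis using tr by force
  qed
  obtain c where c: "c > 0" "\<And>p. p \<in> K \<Longrightarrow> c \<le> norm (\<nu> (fst p) - dmap f (fst p) (snd p))"
    using compact_pos_lower_bound[OF cK cont pos] by blast
  have "c \<le> norm (\<nu> x - dmap f x v)" if "x \<in> Sph" "v \<in> tangent x" "norm v \<le> R" for x v
    using that c(2)[of "(x, v)"] by (simp add: K_def tangent_def)
  with c(1) show ?thesis by (rule that)
qed

text \<open>A bound \<open>c |v| \<le> |df v|\<close> survives changes of the differential smaller than \<open>c/2\<close>; and
  as \<open>\<nu>\<close> is bounded, only tangent vectors of bounded length can be mapped onto \<open>\<nu>\<close>, where a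
  uniform margin keeps \<open>\<nu>\<close> transversal.\<close>
lemma Imm1_C1_stable:
  fixes f \<nu> :: "real^'n \<Rightarrow> real^'m"
  assumes fv: "(f, \<nu>) \<in> Imm1"
  obtains lam where "lam > 0"
    "\<And>g. \<forall>x. x \<notin> Sph \<longrightarrow> g x = 0 \<Longrightarrow> smooth_on (- {0}) (radext g) \<Longrightarrow>
      \<forall>x\<in>Sph. \<forall>v\<in>tangent x. norm (dmap g x v - dmap f x v) \<le> lam * norm v \<Longrightarrow> (g, \<nu>) \<in> Imm1"
proof -
  have Z: "\<forall>x. x \<notin> Sph \<longrightarrow> \<nu> x = 0" and cnu: "continuous_on Sph \<nu>"
    using fv unfolding Imm1_iff by auto
  obtain c where c: "c > 0" "\<And>x v. x \<in> Sph \<Longrightarrow> v \<in> tangent x \<Longrightarrow> c * norm v \<le> norm (dmap f x v)"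
    using Imm1_immersion_bound[OF fv] by blast
  have "bounded (\<nu> ` Sph)"
    by (intro compact_imp_bounded compact_continuous_image cnu compact_sphere)
  then obtain B where B: "B > 0" "\<And>x. x \<in> Sph \<Longrightarrow> norm (\<nu> x) \<le> B"
    unfolding bounded_pos by blast
  define R where "R = 2 * B / c"
  have R: "R > 0" unfolding R_def using B c by simp
  obtain c2 where c2: "c2 > 0"
    "\<And>x v. x \<in> Sph \<Longrightarrow> v \<in> tangent x \<Longrightarrow> norm v \<le> R \<Longrightarrow> c2 \<le> norm (\<nu> x - dmap f x v)"
    using Imm1_transversality_bound[OF fv] by blast
  define lam where "lam = min (c / 2) (c2 / (R + 1))"
  have lam: "lam > 0" "lam \<le> c / 2" "lam \<le> c2 / (R + 1)"
    unfolding lam_def using c(1) c2(1) R by (simp_all only: min.cobounded1 min.cobounded2) simp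
  show ?thesis
  proof (rule that[OF lam(1)])
    fix g assume g0: "\<forall>x. x \<notin> Sph \<longrightarrow> g x = 0" and sm: "smooth_on (- {0}) (radext g)"
      and close: "\<forall>x\<in>Sph. \<forall>v\<in>tangent x. norm (dmap g x v - dmap f x v) \<le> lam * norm v"
    have small: "norm (dmap g x v - dmap f x v) \<le> c / 2 * norm v" if "x \<in> Sph" "v \<in> tangent x" for x v
      using close that lam(2) by (meson mult_right_mono norm_ge_zero order_trans)
    show "(g, \<nu>) \<in> Imm1"
      unfolding Imm1_iff
    proof (intro conjI ballI allI impI)
      fix x v :: "real^'n" assume x: "x \<in> Sph" and v: "v \<in> tangent x" and "v \<noteq> 0"
      have "c * norm v - c / 2 * norm v \<le> norm (dmap g x v)"
        using c(2)[OF x v] small[OF x v] norm_triangle_ineq2[of "dmap f x v" "dmap g x v"]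
        by (simp add: norm_minus_commute)
      moreover have "0 < c / 2 * norm v" using c(1) \<open>v \<noteq> 0\<close> by simp
      ultimately show "dmap g x v \<noteq> 0" by auto
    next
      fix x :: "real^'n" assume x: "x \<in> Sph"
      show "\<nu> x \<notin> dmap g x ` tangent x"
      proof
        assume "\<nu> x \<in> dmap g x ` tangent x"
        then obtain v where v: "v \<in> tangent x" and eq: "\<nu> x = dmap g x v" by blast
        have "c * norm v \<le> norm (dmap f x v)" by (rule c(2)[OF x v])
        also have "\<dots> \<le> norm (\<nu> x) + norm (dmap g x v - dmap f x v)"
          using eq norm_triangle_ineq4[of "\<nu> x" "dmap g x v - dmap f x v"] by simp
        also have "\<dots> \<le> B + c / 2 * norm v" using B(2)[OF x] small[OF x v] by simp
        finally have "norm v \<le> R" unfolding R_def using c(1) by (simp add: field_simps)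
        have "c2 \<le> norm (dmap g x v - dmap f x v)" using c2(2)[OF x v \<open>norm v \<le> R\<close>] eq by simp
        also have "\<dots> \<le> lam * norm v" using close x v by blast
        also have "\<dots> \<le> c2 / (R + 1) * R"
          using lam \<open>norm v \<le> R\<close> by (meson less_imp_le mult_mono norm_ge_zero order_trans)
        also have "\<dots> < c2" using c2(1) R by (simp add: field_simps)
        finally show False by simp
      qed
    qed (use g0 Z sm cnu in auto)
  qed
qed

lemma norm_matrix_vector_mult_le:
  fixes A :: "real^'n^'m"
  shows "norm (A *v x) \<le> norm A * norm x"
proof -
  have "norm (A *v x) \<le> L2_set (\<lambda>i. norm (A $ i) * norm x) UNIV"
    unfolding norm_vec_def[of "A *v x"]
    by (intro L2_set_mono) (simp_all add: matrix_vector_mul_component Cauchy_Schwarz_ineq2)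
  also have "\<dots> = norm A * norm x"
    by (simp add: norm_vec_def L2_set_left_distrib)
  finally show ?thesis .
qed

lemma Imm1_perturb_small:
  fixes f \<nu> :: "real^'n \<Rightarrow> real^'m"
  assumes fv: "(f, \<nu>) \<in> Imm1"
  obtains lam where "lam > 0" "\<And>L. norm L < lam \<Longrightarrow> (perturb f L, \<nu>) \<in> Imm1"
proof -
  have Z: "\<forall>x. x \<notin> Sph \<longrightarrow> f x = 0" and sm: "smooth_on (- {0}) (radext f)"
    using fv unfolding Imm1_iff by auto
  obtain lam where lam: "lam > 0"
    "\<And>g. \<forall>x. x \<notin> Sph \<longrightarrow> g x = 0 \<Longrightarrow> smooth_on (- {0}) (radext g) \<Longrightarrow>
      \<forall>x\<in>Sph. \<forall>v\<in>tangent x. norm (dmap g x v - dmap f x v) \<le> lam * norm v \<Longrightarrow> (g, \<nu>) \<in> Imm1"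
    using Imm1_C1_stable[OF fv] by blast
  have "(perturb f L, \<nu>) \<in> Imm1" if "norm L < lam" for L
  proof (rule lam(2))
    show "\<forall>x. x \<notin> Sph \<longrightarrow> perturb f L x = 0" by (simp add: perturb_def)
    show "smooth_on (- {0}) (radext (perturb f L))" by (rule smooth_on_perturb[OF Z sm])
    have "norm (L *v v) \<le> lam * norm v" for v
      using norm_matrix_vector_mult_le[of L v] that
      by (meson less_imp_le mult_right_mono norm_ge_zero order_trans)
    then show "\<forall>x\<in>Sph. \<forall>v\<in>tangent x. norm (dmap (perturb f L) x v - dmap f x v) \<le> lam * norm v"
      by (simp add: dmap_perturb[OF Z sm])
  qed
  with lam(1) show ?thesis by (rule that)
qed

section \<open>Non-injective linear perturbations form a null set\<close>

lemma differentiable_vec_lambda: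
  fixes g :: "'a::real_normed_vector \<Rightarrow> 'i::finite \<Rightarrow> 'b::euclidean_space"
  assumes "\<And>i. (\<lambda>x. g x i) differentiable (at x0)"
  shows "(\<lambda>x. \<chi> i. g x i) differentiable (at x0)"
proof (rule differentiable_componentwise_within[THEN iffD2], rule ballI)
  fix b :: "'b^'i" assume "b \<in> Basis"
  then obtain i u where "b = axis i u" unfolding Basis_vec_def by blast
  then show "(\<lambda>x. (\<chi> i. g x i) \<bullet> b) differentiable (at x0)"
    using differentiable_inner[OF assms differentiable_const] by (simp add: inner_axis)
qed

lemma differentiable_vec_nth:
  assumes "f differentiable (at a)"
  shows "(\<lambda>x. f x $ i) differentiable (at a)"
  using differentiable_chain_at[OF assms bounded_linear_imp_differentiable[OF bounded_linear_vec_nth]]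
  by (simp add: comp_def)

lemma differentiable_sgn:
  fixes x :: "'a::real_inner"
  assumes "x \<noteq> 0"
  shows "sgn differentiable (at x)"
proof -
  have "(\<lambda>y. (1 / norm y) *\<^sub>R y) differentiable (at x)"
    using assms by (intro differentiable_scaleR differentiable_ident invnorm_poly_differentiable
        invnorm_poly.invnorm)
  moreover have "sgn = (\<lambda>y::'a. (1 / norm y) *\<^sub>R y)"
    by (simp add: fun_eq_iff sgn_div_norm divide_inverse_commute)
  ultimately show ?thesis by simp
qed

text \<open>Central projection of the hyperplane \<open>z $ k = s\<close> onto the unit sphere; for
  \<open>s = \<plusminus>1\<close> and varying \<open>k\<close> these are charts covering the sphere.\<close>
definition gnomonic :: "'n::finite \<Rightarrow> real \<Rightarrow> real^'n \<Rightarrow> real^'n" where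
  "gnomonic k s z = sgn (\<chi> i. if i = k then s else z $ i)"

lemma gnomonic_nonzero_arg:
  assumes "s \<noteq> 0" shows "(\<chi> i. if i = k then s else z $ i) \<noteq> 0"
proof
  assume "(\<chi> i. if i = k then s else z $ i) = 0"
  then have "(\<chi> i. if i = k then s else z $ i) $ k = 0" by simp
  with assms show False by simp
qed

lemma norm_gnomonic: "s \<noteq> 0 \<Longrightarrow> norm (gnomonic k s z) = 1"
  unfolding gnomonic_def by (simp add: norm_sgn gnomonic_nonzero_arg)

lemma gnomonic_cong:
  assumes "\<And>i. i \<noteq> k \<Longrightarrow> z $ i = z' $ i"
  shows "gnomonic k s z = gnomonic k s z'"
  unfolding gnomonic_def using assms by (intro arg_cong[where f=sgn]) (simp add: vec_eq_iff)

lemma gnomonic_inverse: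
  assumes "norm x = 1" "x $ k \<noteq> 0"
  shows "gnomonic k (sgn (x $ k)) ((1 / \<bar>x $ k\<bar>) *\<^sub>R x) = x"
proof -
  have "(\<chi> i. if i = k then sgn (x $ k) else ((1 / \<bar>x $ k\<bar>) *\<^sub>R x) $ i) = (1 / \<bar>x $ k\<bar>) *\<^sub>R x"
    using assms(2) by (simp add: vec_eq_iff sgn_if)
  then have "gnomonic k (sgn (x $ k)) ((1 / \<bar>x $ k\<bar>) *\<^sub>R x) = sgn ((1 / \<bar>x $ k\<bar>) *\<^sub>R x)"
    by (simp only: gnomonic_def)
  also have "\<dots> = x"
    using assms by (simp add: sgn_scaleR sgn_div_norm)
  finally show ?thesis .
qed

lemma differentiable_gnomonic:
  assumes "s \<noteq> 0"
  shows "gnomonic k s differentiable (at z)"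
proof -
  have lin: "(\<lambda>z. \<chi> i. if i = k then s else z $ i) differentiable (at z)"
  proof (intro differentiable_vec_lambda)
    fix i
    show "(\<lambda>z. if i = k then s else z $ i) differentiable (at z)"
      by (cases "i = k") (simp_all add: bounded_linear_imp_differentiable bounded_linear_vec_nth)
  qed
  show ?thesis
    unfolding gnomonic_def[abs_def]
    using differentiable_chain_at[OF lin differentiable_sgn[OF gnomonic_nonzero_arg[OF assms, of k z]]]
    by (simp add: comp_def)
qed

text \<open>Column \<open>j\<close> is solved from \<open>M *v u = w\<close>, the other columns are copied from \<open>M\<close>.\<close>
definition solve_column :: "'n::finite \<Rightarrow> real^'n^'m \<Rightarrow> real^'n \<Rightarrow> real^'m \<Rightarrow> real^'n^'m" where
  "solve_column j M u w = (\<chi> r i. if i = j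
      then (w $ r - (\<Sum>i'\<in>UNIV - {j}. M $ r $ i' * u $ i')) / u $ j else M $ r $ i)"

lemma solve_column_cong:
  "(\<And>r i. i \<noteq> j \<Longrightarrow> M $ r $ i = M' $ r $ i) \<Longrightarrow> solve_column j M u w = solve_column j M' u w"
  unfolding solve_column_def by (intro arg_cong[of _ _ vec_lambda] ext) auto

lemma solve_column_unique:
  assumes "L *v u = w" "u $ j \<noteq> 0"
  shows "solve_column j L u w = L"
proof -
  have "L $ r $ j = (w $ r - (\<Sum>i'\<in>UNIV - {j}. L $ r $ i' * u $ i')) / u $ j" for r
  proof -
    have "w $ r = (\<Sum>i\<in>UNIV. L $ r $ i * u $ i)"
      using assms(1) by (auto simp: matrix_vector_mult_def)
    also have "\<dots> = L $ r $ j * u $ j + (\<Sum>i'\<in>UNIV - {j}. L $ r $ i' * u $ i')"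
      by (rule sum.remove) auto
    finally show ?thesis using assms(2) by (simp add: field_simps)
  qed
  then show ?thesis by (simp add: solve_column_def vec_eq_iff)
qed

lemma differentiable_solve_column:
  fixes U :: "'a::real_normed_vector \<Rightarrow> real^'n" and W :: "'a \<Rightarrow> real^'m"
  assumes M: "M differentiable (at a)" and U: "U differentiable (at a)"
    and W: "W differentiable (at a)" and j: "U a $ j \<noteq> 0"
  shows "(\<lambda>x. solve_column j (M x) (U x) (W x)) differentiable (at a)"
  unfolding solve_column_def
proof (intro differentiable_vec_lambda)
  fix r i
  have Mri: "(\<lambda>x. M x $ r $ i') differentiable (at a)" for i'
    by (intro differentiable_vec_nth M)
  show "(\<lambda>x. if i = j then (W x $ r - (\<Sum>i'\<in>UNIV - {j}. M x $ r $ i' * U x $ i')) / U x $ j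
      else M x $ r $ i) differentiable (at a)"
  proof (cases "i = j")
    case True
    have "(\<lambda>x. (W x $ r - (\<Sum>i'\<in>UNIV - {j}. M x $ r $ i' * U x $ i')) / U x $ j) differentiable (at a)"
      using j by (intro differentiable_divide differentiable_diff differentiable_sum differentiable_mult
          ballI Mri differentiable_vec_nth U W) auto
    with True show ?thesis by simp
  qed (simp add: Mri)
qed

definition column_point :: "('n \<Rightarrow> 'm) \<Rightarrow> 'n::finite \<times> real \<Rightarrow> 'n \<Rightarrow> real^'n^'m \<Rightarrow> real^'n" where
  "column_point \<alpha> c j M = gnomonic (fst c) (snd c) (\<chi> i. M $ \<alpha> i $ j)"

lemma norm_column_point: "snd c \<noteq> 0 \<Longrightarrow> norm (column_point \<alpha> c j M) = 1"
  by (simp add: column_point_def norm_gnomonic)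

lemma differentiable_column_point:
  assumes "snd c \<noteq> 0"
  shows "column_point \<alpha> c j differentiable (at M)"
proof -
  have "(\<lambda>M. \<chi> i. M $ \<alpha> i $ j) differentiable (at M)"
    by (intro differentiable_vec_lambda differentiable_vec_nth differentiable_ident)
  from differentiable_chain_at[OF this differentiable_gnomonic[OF assms]]
  show ?thesis by (simp add: column_point_def[abs_def] comp_def)
qed

definition collision_set ::
  "(real^'n \<Rightarrow> real^'m) \<Rightarrow> (real^'n^'m \<Rightarrow> real^'n) \<Rightarrow> (real^'n^'m \<Rightarrow> real^'n) \<Rightarrow> 'n \<Rightarrow> 'm
    \<Rightarrow> (real^'n^'m) set" where
  "collision_set F P Q j r0 = (\<lambda>M. solve_column j M (P M - Q M) (F (Q M) - F (P M))) `
     {M. M $ r0 $ j = 0 \<and> (P M - Q M) $ j \<noteq> 0}"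

lemma negligible_collision_set:
  fixes F :: "real^'n \<Rightarrow> real^'m"
  assumes F: "\<And>y. y \<in> Sph \<Longrightarrow> F differentiable (at y)"
    and P: "\<And>M. P differentiable (at M)" "\<And>M. P M \<in> Sph"
    and Q: "\<And>M. Q differentiable (at M)" "\<And>M. Q M \<in> Sph"
  shows "negligible (collision_set F P Q j r0)"
  unfolding collision_set_def
proof (rule negligible_differentiable_image_negligible[OF order_refl])
  have "negligible {M :: real^'n^'m. M \<bullet> axis r0 (axis j 1) = 0}"
    by (rule negligible_standard_hyperplane) simp
  then show "negligible {M :: real^'n^'m. M $ r0 $ j = 0 \<and> (P M - Q M) $ j \<noteq> 0}"
    by (rule negligible_subset) (simp add: inner_axis subset_eq)
  have FP: "(\<lambda>M. F (P M)) differentiable (at M)" for M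
    using differentiable_chain_at[OF P(1) F[OF P(2)]] by (simp add: comp_def)
  have FQ: "(\<lambda>M. F (Q M)) differentiable (at M)" for M
    using differentiable_chain_at[OF Q(1) F[OF Q(2)]] by (simp add: comp_def)
  show "(\<lambda>M. solve_column j M (P M - Q M) (F (Q M) - F (P M))) differentiable_on
      {M. M $ r0 $ j = 0 \<and> (P M - Q M) $ j \<noteq> 0}"
  proof (intro differentiable_at_imp_differentiable_on)
    fix M assume "M \<in> {M. M $ r0 $ j = 0 \<and> (P M - Q M) $ j \<noteq> 0}"
    then show "(\<lambda>M. solve_column j M (P M - Q M) (F (Q M) - F (P M))) differentiable (at M)"
      by (intro differentiable_solve_column differentiable_ident differentiable_diff P(1) Q(1) FP FQ) simp
  qed
qed

text \<open>Column \<open>j\<close> of \<open>M\<close> stores gnomonic coordinates of \<open>x\<close> and \<open>y\<close> in the rows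
  \<open>e (Inl i)\<close> and \<open>e (Inr i)\<close>; row \<open>r0\<close> is left free, which is what makes the
  parameter set a hyperplane.\<close>
lemma non_injective_perturbation_in_collision_set:
  fixes F :: "real^'n \<Rightarrow> real^'m" and e :: "'n + 'n \<Rightarrow> 'm" and k1 k2 :: 'n
  defines "A \<equiv> Inl ` (- {k1}) \<union> Inr ` (- {k2})"
  assumes x: "x \<in> Sph" and y: "y \<in> Sph" and j: "(x - y) $ j \<noteq> 0"
    and k1: "x $ k1 \<noteq> 0" and k2: "y $ k2 \<noteq> 0"
    and e: "inj_on e A" "r0 \<notin> e ` A"
    and eq: "F x + L *v x = F y + L *v y"
  shows "L \<in> collision_set F (column_point (e \<circ> Inl) (k1, sgn (x $ k1)) j)
    (column_point (e \<circ> Inr) (k2, sgn (y $ k2)) j) j r0"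
proof -
  define z where "z a = (case a of Inl i \<Rightarrow> x $ i / \<bar>x $ k1\<bar> | Inr i \<Rightarrow> y $ i / \<bar>y $ k2\<bar>)" for a
  define c where "c r = (if r \<in> e ` A then z (inv_into A e r) else 0)" for r
  define M where "M = (\<chi> r i. if i = j then c r else L $ r $ i)"
  have Me: "M $ e a $ j = z a" if "a \<in> A" for a
    using that e(1) by (simp add: M_def c_def)
  have PM: "column_point (e \<circ> Inl) (k1, sgn (x $ k1)) j M = x"
  proof -
    have "column_point (e \<circ> Inl) (k1, sgn (x $ k1)) j M
        = gnomonic k1 (sgn (x $ k1)) ((1 / \<bar>x $ k1\<bar>) *\<^sub>R x)"
      unfolding column_point_def fst_conv snd_conv by (rule gnomonic_cong) (simp add: Me A_def z_def)
    then show ?thesis using gnomonic_inverse x k1 by simp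
  qed
  have QM: "column_point (e \<circ> Inr) (k2, sgn (y $ k2)) j M = y"
  proof -
    have "column_point (e \<circ> Inr) (k2, sgn (y $ k2)) j M
        = gnomonic k2 (sgn (y $ k2)) ((1 / \<bar>y $ k2\<bar>) *\<^sub>R y)"
      unfolding column_point_def fst_conv snd_conv by (rule gnomonic_cong) (simp add: Me A_def z_def)
    then show ?thesis using gnomonic_inverse y k2 by simp
  qed
  have "solve_column j M (x - y) (F y - F x) = solve_column j L (x - y) (F y - F x)"
    by (rule solve_column_cong) (simp add: M_def)
  also have "\<dots> = L"
    using eq j by (intro solve_column_unique) (simp_all add: matrix_vector_mult_diff_distrib algebra_simps)
  finally have "solve_column j M (x - y) (F y - F x) = L" .
  moreover have "M $ r0 $ j = 0" using e(2) by (simp add: M_def c_def)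
  ultimately show ?thesis
    unfolding collision_set_def using j PM QM by (intro image_eqI[of _ _ M]) simp_all
qed

lemma exists_inj_on_avoiding:
  fixes A :: "'a set"
  assumes "finite A" "card A < CARD('m::finite)"
  shows "\<exists>(e :: 'a \<Rightarrow> 'm) r0. inj_on e A \<and> r0 \<notin> e ` A"
proof -
  fix r0 :: 'm
  have "card A \<le> card (UNIV - {r0})"
    using assms(2) by (simp add: card_Diff_singleton)
  from card_le_inj[OF assms(1) _ this] obtain e where "e ` A \<subseteq> UNIV - {r0}" "inj_on e A"
    by auto
  then show ?thesis by blast
qed

lemma card_punctured_copies:
  "card (Inl ` (- {k1}) \<union> Inr ` (- {k2}) :: ('n::finite + 'n) set) = 2 * CARD('n) - 2"
proof -
  have "card (- {k} :: 'n set) = CARD('n) - 1" for k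
    by (simp add: Compl_eq_Diff_UNIV card_Diff_singleton)
  then show ?thesis
    by (subst card_Un_disjoint) (auto simp: card_image)
qed

lemma negligible_non_injective_perturbations:
  fixes F :: "real^'n \<Rightarrow> real^'m"
  assumes dim: "2 * CARD('n) \<le> CARD('m) + 1"
    and F: "\<And>y. y \<in> Sph \<Longrightarrow> F differentiable (at y)"
  shows "negligible {L :: real^'n^'m. \<not> inj_on (\<lambda>x. F x + L *v x) Sph}"
proof -
  define A where "A k1 k2 = Inl ` (- {k1}) \<union> Inr ` (- {k2})" for k1 k2 :: 'n
  have "\<exists>(e :: 'n + 'n \<Rightarrow> 'm) r0. inj_on e (A k1 k2) \<and> r0 \<notin> e ` A k1 k2" for k1 k2
  proof -
    have "0 < CARD('m)" by simp
    then have "card (A k1 k2) < CARD('m)"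
      using dim card_punctured_copies[of k1 k2] unfolding A_def by arith
    then show ?thesis
      by (rule exists_inj_on_avoiding[OF finite])
  qed
  then obtain E :: "'n \<Rightarrow> 'n \<Rightarrow> 'n + 'n \<Rightarrow> 'm" and R0
    where ER: "\<And>k1 k2. inj_on (E k1 k2) (A k1 k2)" "\<And>k1 k2. R0 k1 k2 \<notin> E k1 k2 ` A k1 k2"
    by metis
  define C where "C = (\<lambda>(j, k1, k2, s1, s2). collision_set F
    (column_point (E k1 k2 \<circ> Inl) (k1, s1) j) (column_point (E k1 k2 \<circ> Inr) (k2, s2) j) j (R0 k1 k2))"
  define I where "I = (UNIV :: 'n set) \<times> (UNIV :: 'n set) \<times> (UNIV :: 'n set)
    \<times> {-1, 1 :: real} \<times> {-1, 1 :: real}"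
  have "negligible (C p)" if "p \<in> I" for p
  proof -
    obtain j k1 k2 s1 s2 where p: "p = (j, k1, k2, s1, s2)" and s: "s1 \<noteq> 0" "s2 \<noteq> 0"
      using \<open>p \<in> I\<close> by (auto simp: I_def)
    show ?thesis
      unfolding p C_def prod.case
      by (rule negligible_collision_set[OF F])
        (simp_all add: s differentiable_column_point norm_column_point)
  qed
  then have "negligible (\<Union> (C ` I))"
    by (intro negligible_Union) (auto simp: I_def)
  moreover have "{L. \<not> inj_on (\<lambda>x. F x + L *v x) Sph} \<subseteq> \<Union> (C ` I)"
  proof
    fix L assume "L \<in> {L. \<not> inj_on (\<lambda>x. F x + L *v x) Sph}"
    then obtain x y where xy: "x \<in> Sph" "y \<in> Sph" "x \<noteq> y" "F x + L *v x = F y + L *v y"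
      by (auto simp: inj_on_def)
    obtain j where j: "(x - y) $ j \<noteq> 0" using xy(3) by (auto simp: vec_eq_iff)
    have "x \<noteq> 0" "y \<noteq> 0" using xy(1,2) by auto
    then obtain k1 k2 where k1: "x $ k1 \<noteq> 0" and k2: "y $ k2 \<noteq> 0" by (auto simp: vec_eq_iff)
    have "L \<in> C (j, k1, k2, sgn (x $ k1), sgn (y $ k2))"
      unfolding C_def using non_injective_perturbation_in_collision_set[OF xy(1,2) j k1 k2
          ER[of k1 k2, unfolded A_def] xy(4)] by simp
    moreover have "(j, k1, k2, sgn (x $ k1), sgn (y $ k2)) \<in> I"
      using k1 k2 by (simp add: I_def sgn_if)
    ultimately show "L \<in> \<Union> (C ` I)" by blast
  qed
  ultimately show ?thesis by (rule negligible_subset)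
qed

lemma exists_small_injective_perturbation:
  fixes F :: "real^'n \<Rightarrow> real^'m"
  assumes "2 * CARD('n) \<le> CARD('m) + 1" "\<And>y. y \<in> Sph \<Longrightarrow> F differentiable (at y)" "e > 0"
  obtains L :: "real^'n^'m" where "norm L < e" "inj_on (\<lambda>x. F x + L *v x) Sph"
proof -
  have "\<not> negligible (ball (0 :: real^'n^'m) e)"
    using open_not_negligible[of "ball (0 :: real^'n^'m) e"] assms(3) by simp
  then have "\<not> ball 0 e \<subseteq> {L :: real^'n^'m. \<not> inj_on (\<lambda>x. F x + L *v x) Sph}"
    using negligible_subset negligible_non_injective_perturbations[OF assms(1,2)] by blast
  with that show ?thesis by auto
qed

section \<open>Paths in \<open>Imm\<^sub>1\<close>\<close>

lemma openin_Imm1_top: "openin Imm1_top = imm_open"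
  unfolding Imm1_top_def by (simp add: istopology_imm_open)

lemma topspace_Imm1_top: "topspace Imm1_top = Imm1"
proof -
  have "imm_open Imm1" unfolding imm_open_def by (auto intro: exI[of _ 1])
  then have "Imm1 \<subseteq> topspace Imm1_top"
    using openin_subset[of Imm1_top Imm1] by (simp add: openin_Imm1_top)
  moreover have "topspace Imm1_top \<subseteq> Imm1"
    unfolding topspace_def openin_Imm1_top imm_open_def by auto
  ultimately show ?thesis by blast
qed

lemma continuous_map_Imm1_top_if_Lipschitz:
  fixes g :: "'a::metric_space \<Rightarrow> ((real^'n \<Rightarrow> real^'m) \<times> (real^'n \<Rightarrow> real^'m))"
  assumes g: "g ` S \<subseteq> Imm1"
    and lip: "\<And>s t. s \<in> S \<Longrightarrow> t \<in> S \<Longrightarrow> imm_dist (g s) (g t) \<le> K * dist s t"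
  shows "continuous_map (top_of_set S) Imm1_top g"
  unfolding continuous_map topspace_Imm1_top openin_Imm1_top
proof (intro conjI allI impI)
  show "g ` topspace (top_of_set S) \<subseteq> Imm1" using g by simp
  fix U :: "((real^'n \<Rightarrow> real^'m) \<times> (real^'n \<Rightarrow> real^'m)) set"
  assume U: "imm_open U"
  show "openin (top_of_set S) {x \<in> topspace (top_of_set S). g x \<in> U}"
    unfolding openin_euclidean_subtopology_iff
  proof (intro conjI ballI)
    fix t assume t: "t \<in> {x \<in> topspace (top_of_set S). g x \<in> U}"
    then obtain e where e: "e > 0" "\<forall>q\<in>Imm1. imm_dist q (g t) < e \<longrightarrow> q \<in> U"
      using U unfolding imm_open_def by auto
    have "g s \<in> U" if "s \<in> S" "dist s t < e / (\<bar>K\<bar> + 1)" for s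
    proof -
      have "K * dist s t \<le> (\<bar>K\<bar> + 1) * dist s t" by (simp add: mult_right_mono)
      moreover have "t \<in> S" using t by simp
      ultimately have "imm_dist (g s) (g t) \<le> (\<bar>K\<bar> + 1) * dist s t"
        using lip[OF that(1)] by fastforce
      also have "\<dots> < e"
        using that(2) by (simp add: field_simps add_pos_nonneg)
      finally show ?thesis using e(2) g that(1) by blast
    qed
    then show "\<exists>d>0. \<forall>s\<in>S. dist s t < d \<longrightarrow> s \<in> {x \<in> topspace (top_of_set S). g x \<in> U}"
      using e(1) by (intro exI[of _ "e / (\<bar>K\<bar> + 1)"]) (auto simp: add_pos_nonneg)
  qed auto
qed

lemma imm_dist_perturb_le:
  fixes f \<nu> :: "real^'n \<Rightarrow> real^'m"
  assumes Z: "\<forall>x. x \<notin> Sph \<longrightarrow> f x = 0" and sm: "smooth_on (- {0}) (radext f)"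
  shows "imm_dist (perturb f A, \<nu>) (perturb f B, \<nu>) \<le> 2 * norm (A - B)"
proof -
  obtain a :: 'n where True by simp
  have "(axis a 1, 0) \<in> {(x, v). x \<in> (Sph :: (real^'n) set) \<and> v \<in> tangent x \<and> norm v \<le> 1}"
    by (simp add: tangent_def)
  then have ne: "(Sph :: (real^'n) set) \<noteq> {}"
    and ne': "{(x, v). x \<in> (Sph :: (real^'n) set) \<and> v \<in> tangent x \<and> norm v \<le> 1} \<noteq> {}"
    by blast+
  have diff: "norm ((A - B) *v v) \<le> norm (A - B)" if "norm v \<le> 1" for v
    using norm_matrix_vector_mult_le[of "A - B" v] that
    by (meson mult_left_le norm_ge_zero order_trans)
  have "(SUP x\<in>Sph. norm (perturb f A x - perturb f B x)) \<le> norm (A - B)"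
    by (rule cSUP_least[OF ne]) (simp add: perturb_def diff flip: matrix_vector_mult_diff_rdistrib)
  moreover have "(SUP xv\<in>{(x, v). x \<in> Sph \<and> v \<in> tangent x \<and> norm v \<le> 1}.
      norm (dmap (perturb f A) (fst xv) (snd xv) - dmap (perturb f B) (fst xv) (snd xv))) \<le> norm (A - B)"
    by (rule cSUP_least[OF ne'])
      (auto simp: dmap_perturb[OF Z sm] diff simp flip: matrix_vector_mult_diff_rdistrib)
  moreover have "(SUP x\<in>Sph. norm (\<nu> x - \<nu> x)) \<le> 0"
    by (rule cSUP_least[OF ne]) simp
  ultimately show ?thesis unfolding imm_dist_def by simp
qed

lemma pathin_perturb_segment:
  fixes f \<nu> :: "real^'n \<Rightarrow> real^'m"
  assumes fv: "(f, \<nu>) \<in> Imm1" and seg: "\<And>t. t \<in> {0..1} \<Longrightarrow> (perturb f (t *\<^sub>R L), \<nu>) \<in> Imm1"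
  shows "pathin Imm1_top (\<lambda>t. (perturb f (t *\<^sub>R L), \<nu>))"
  unfolding pathin_def
proof (rule continuous_map_Imm1_top_if_Lipschitz)
  have Z: "\<forall>x. x \<notin> Sph \<longrightarrow> f x = 0" and sm: "smooth_on (- {0}) (radext f)"
    using fv unfolding Imm1_iff by auto
  show "(\<lambda>t. (perturb f (t *\<^sub>R L), \<nu>)) ` {0..1} \<subseteq> Imm1" using seg by auto
  show "imm_dist (perturb f (s *\<^sub>R L), \<nu>) (perturb f (t *\<^sub>R L), \<nu>) \<le> 2 * norm L * dist s t" for s t
    using imm_dist_perturb_le[OF Z sm, where A = "s *\<^sub>R L" and B = "t *\<^sub>R L" and \<nu> = \<nu>]
    by (simp add: dist_real_def mult_ac flip: scaleR_diff_left)
qed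

theorem proposition5:
  assumes "CARD('n::finite) \<ge> 2"
    and "CARD('m::finite) = 2 * CARD('n) - 1"
    and "(f, \<nu>) \<in> (Imm1 :: ((real^'n \<Rightarrow> real^'m) \<times> (real^'n \<Rightarrow> real^'m)) set)"
  shows "\<exists>h \<mu>. (h, \<mu>) \<in> Emb1 \<and> path_component_of Imm1_top (f, \<nu>) (h, \<mu>)"
proof -
  have Z: "\<forall>x. x \<notin> Sph \<longrightarrow> f x = 0" and sm: "smooth_on (- {0}) (radext f)"
    using assms(3) unfolding Imm1_iff by auto
  obtain lam where lam: "lam > 0" "\<And>L. norm L < lam \<Longrightarrow> (perturb f L, \<nu>) \<in> Imm1"
    using Imm1_perturb_small[OF assms(3)] by blast
  have "2 * CARD('n) \<le> CARD('m) + 1" using assms(1,2) by simp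
  moreover have "\<And>y. y \<in> Sph \<Longrightarrow> radext f differentiable (at y)"
    by (rule smooth_on_imp_differentiable[OF sm]) auto
  ultimately obtain L where L: "norm L < lam" "inj_on (\<lambda>x. radext f x + L *v x) Sph"
    using exists_small_injective_perturbation lam(1) by blast
  have "(perturb f (t *\<^sub>R L), \<nu>) \<in> Imm1" if "t \<in> {0..1}" for t
  proof (rule lam(2))
    have "norm (t *\<^sub>R L) \<le> norm L" using that by (simp add: mult_left_le_one_le)
    then show "norm (t *\<^sub>R L) < lam" using L(1) by linarith
  qed
  then have "pathin Imm1_top (\<lambda>t. (perturb f (t *\<^sub>R L), \<nu>))"
    by (rule pathin_perturb_segment[OF assms(3)])
  moreover have "inj_on (perturb f L) Sph"
    using L(2) by (rule inj_on_cong[THEN iffD1, rotated]) (simp add: perturb_def radext_on_Sph)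
  then have "(perturb f L, \<nu>) \<in> Emb1"
    using lam(2)[OF L(1)] by (simp add: Emb1_def)
  ultimately show ?thesis
    unfolding path_component_of_def using perturb_0[OF Z] by fastforce
qed

end
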